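(* Let $\lambda\in\mathbb C$ with $\lambda\ne1$ and $\Re(\lambda)>0$, and let $Z$ be a complex random variable with $\mathbb E|Z|<\infty$, $\mathbb EZ\ne0$ and $Z\overset{\mathcal L}{=}e^{-\lambda T}(Z^{(1)}+\dots+Z^{(m)})$, where $Z^{(1)},\dots,Z^{(m)}$ are independent copies of $Z$ independent of $T$. Let $\varphi(t)=\mathbb E e^{i\langle t,Z\rangle}$ ($t\in\mathbb C$) and $\psi(r)=\max_{|t|=r}|\varphi(t)|$ for $r\ge0$. Then for every $a\in\,]0,1/\Re(\lambda)[$, $\psi(r)=O(r^{-a})$ as $r\to\infty$.
   Context: $m\ge2$ is an integer. $T=\tau_{(1)}+\dots+\tau_{(m-1)}$ where the $\tau_{(j)}$ are independent and $\tau_{(j)}$ is exponential with parameter $j$. For $x,y\in\mathbb C$, $\langle x,y\rangle=\Re(\overline xy)$. *)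

theory Defs
  imports "HOL-Probability.Probability" "HOL-Library.Landau_Symbols"
begin

definition T_law :: "nat \<Rightarrow> real measure" where
  "T_law m = distr (PiM {1..m-1} (\<lambda>j. density lborel (exponential_density (real j))))
                   borel (\<lambda>x. \<Sum>j\<in>{1..m-1}. x j)"

definition fixpoint_rhs_law :: "nat \<Rightarrow> complex \<Rightarrow> complex measure \<Rightarrow> complex measure" where
  "fixpoint_rhs_law m lam \<mu> = distr (T_law m \<Otimes>\<^sub>M PiM {1..m} (\<lambda>_. \<mu>)) borel
      (\<lambda>(t, zs). exp (- lam * complex_of_real t) * (\<Sum>j\<in>{1..m}. zs j))"

definition cinner :: "complex \<Rightarrow> complex \<Rightarrow> real" where
  "cinner x y = Re (cnj x * y)"

end

theory Submission
  imports Defs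
begin

text \<open>
  Put \<open>kappa(s) = exp (- cnj lam * s)\<close>, so that \<open><t, e^(-lam s) z> = <kappa(s) t, z>\<close> and the
  fixed-point equation becomes \<open>phi(t) = E[phi(kappa(T) t)^m]\<close>. The law of \<open>T\<close> charges every
  interval of \<open>[0, \<infinity>)\<close> and \<open>phi\<close> is continuous, so \<open>|phi(t)| = 1\<close> forces
  \<open>phi(kappa(s) t) = 1\<close> for all \<open>s \<ge> 0\<close>. Along \<open>s = s0 + 2 pi n / |Im lam|\<close> the point
  \<open>kappa(s) t\<close> tends to \<open>0\<close> in the fixed direction \<open>kappa(s0) t\<close>, so the derivative of \<open>phi\<close> at \<open>0\<close>
  gives \<open><kappa(s0) t, EZ> = 0\<close>. Differentiating the fixed-point equation at \<open>0\<close> gives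
  \<open>EZ = m E[e^(-lam T)] EZ\<close>, which is impossible for real \<open>lam \<noteq> 1\<close>; hence \<open>Im lam \<noteq> 0\<close>, some
  \<open>kappa(s0)\<close> is a quarter turn, and \<open>t = 0\<close>. Thus \<open>psi(r) < 1\<close> for \<open>r > 0\<close>, and a minimum
  argument on \<open>[1, r]\<close> yields \<open>psi \<le> 1 - c\<close> on \<open>[1, \<infinity>)\<close>.

  Moreover \<open>|phi(t)| \<le> E[psi(e^(-Re lam T) |t|)^m]\<close>. If \<open>psi \<le> q\<close> beyond \<open>r0\<close> and
  \<open>q^(m-1) E[e^(b Re lam T)] < 1\<close>, the maximum \<open>B\<close> of \<open>psi(y) y^b\<close> over \<open>[r0, r]\<close> satisfies
  \<open>B \<le> E[e^(b Re lam T)] (r0^b + q^(m-1) B)\<close>, a bound independent of \<open>r\<close>. With \<open>q = 1 - c\<close>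
  this applies to some small \<open>b > 0\<close>, so \<open>psi \<rightarrow> 0\<close>; then \<open>q\<close> may be taken as small as needed,
  and every \<open>b = a < 1 / Re lam\<close> is admissible because \<open>E[e^(c T)] < \<infinity>\<close> for \<open>c < 1\<close>.
\<close>

lemma has_bochner_integral_exponential_density_mult_exp:
  fixes l c :: real
  assumes l: "0 < l" and c: "c < l"
  shows "has_bochner_integral lborel (\<lambda>x. exponential_density l x * exp (c * x)) (l / (l - c))"
proof (rule has_bochner_integral_nn_integral)
  show "AE x in lborel. 0 \<le> exponential_density l x * exp (c * x)"
    using l by (auto simp: exponential_density_def)
  have "((\<lambda>x. l * exp (- (l - c) * x)) has_integral l * (exp (- (l - c) * 0) / (l - c))) {0..}"
    using has_integral_exp_minus_to_infinity[of "l - c" 0] c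
    by (intro has_integral_mult_right) auto
  then have "((\<lambda>x. if x \<in> {0..} then l * exp (- (l - c) * x) else 0) has_integral l / (l - c)) UNIV"
    by (subst has_integral_restrict_UNIV) simp
  moreover have "(\<lambda>x. if x \<in> {0..} then l * exp (- (l - c) * x) else 0)
      = (\<lambda>x. exponential_density l x * exp (c * x))"
    by (auto simp: exponential_density_def fun_eq_iff exp_add[symmetric] algebra_simps)
  ultimately show "(\<integral>\<^sup>+ x. ennreal (exponential_density l x * exp (c * x)) \<partial>lborel) = ennreal (l / (l - c))"
    by (intro nn_integral_has_integral_lborel) (use l in \<open>auto simp: exponential_density_def\<close>)
qed (use l c in auto)

lemma emeasure_exponential_density_Ioc_pos:
  assumes l: "0 < l" and ab: "0 \<le> a" "a < b"
  shows "0 < emeasure (density lborel (exponential_density l)) {a<..b}"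
proof -
  let ?N = "density lborel (exponential_density l)"
  interpret prob_space ?N by (rule prob_space_exponential_density[OF l])
  have "emeasure ?N {a<..b} = emeasure ?N ({..b} - {..a})"
    by (rule arg_cong[where f = "emeasure _"]) auto
  also have "\<dots> = emeasure ?N {..b} - emeasure ?N {..a}"
    using ab by (intro emeasure_Diff) auto
  also have "\<dots> = ennreal (erlang_CDF 0 l b - erlang_CDF 0 l a)"
    using l by (simp add: emeasure_erlang_density ennreal_minus erlang_CDF_def)
  finally have "emeasure ?N {a<..b} = ennreal (erlang_CDF 0 l b - erlang_CDF 0 l a)" .
  moreover have "exp (- l * b) < exp (- l * a)"
    using l ab by simp
  ultimately show ?thesis
    using ab by (simp add: erlang_CDF_def)
qed

lemma prod_ennreal_pos:
  fixes f :: "'b \<Rightarrow> ennreal"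
  shows "(\<And>a. a \<in> A \<Longrightarrow> 0 < f a) \<Longrightarrow> 0 < prod f A"
  by (induct A rule: infinite_finite_induct) (auto simp: ennreal_zero_less_mult_iff)

lemma bex_of_AE_of_emeasure_pos:
  assumes "AE x in N. Q x" "A \<in> sets N" "0 < emeasure N A"
  shows "\<exists>x\<in>A. Q x"
proof (rule ccontr)
  assume none: "\<not> (\<exists>x\<in>A. Q x)"
  from assms(1) have "AE x in N. x \<notin> A"
    by eventually_elim (use none in blast)
  moreover have "{x \<in> space N. \<not> x \<notin> A} = A"
    using sets.sets_into_space[OF assms(2)] by auto
  ultimately have "emeasure N A = 0"
    by (rule AE_iff_measurable[OF assms(2), THEN iffD1, rotated])
  with assms(3) show False by simp
qed

lemma LIMSEQ_exp_neg_mult_of_nat: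
  fixes c :: real
  assumes "0 < c"
  shows "(\<lambda>n. exp (- c * real n)) \<longlonglongrightarrow> 0"
proof -
  have "(\<lambda>n. exp (- c) ^ n) \<longlonglongrightarrow> 0"
    using assms by (intro LIMSEQ_power_zero) auto
  moreover have "exp (- c * real n) = exp (- c) ^ n" for n
    by (subst exp_of_nat_mult[symmetric]) (simp add: mult_ac)
  ultimately show ?thesis by simp
qed

lemma powr_exp_mult:
  fixes x y z :: real
  assumes "0 < x"
  shows "(exp y * x) powr z = exp (y * z) * x powr z"
  using assms by (simp add: powr_def ln_mult distrib_left exp_add mult_ac)

lemma power_le_1_minus_three_halves:
  fixes x y :: real
  assumes x: "0 \<le> x" "x \<le> 1" and y: "0 \<le> y" "y \<le> 1/2" "y \<le> 1 - x" and m: "2 \<le> m"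
  shows "x ^ m \<le> 1 - 3/2 * y"
proof -
  have "x ^ m \<le> x\<^sup>2"
    by (rule power_decreasing[OF m]) (use x in auto)
  moreover have "x\<^sup>2 \<le> 1 - 3/2 * y"
  proof (cases "x \<le> 1/2")
    case True
    then have "x\<^sup>2 \<le> (1/2)\<^sup>2"
      using x by (intro power_mono) auto
    then show ?thesis
      using y by (simp add: power2_eq_square)
  next
    case False
    then have "0 \<le> y * (x - 1/2)"
      using y by simp
    then have "3/2 * y \<le> y * (1 + x)"
      by (simp add: algebra_simps)
    also have "\<dots> \<le> (1 - x) * (1 + x)"
      using y x by (intro mult_right_mono) auto
    finally show ?thesis
      by (simp add: power2_eq_square algebra_simps)
  qed
  ultimately show ?thesis by simp
qed

lemma norm_iexp_diff_le: "cmod (iexp x - iexp y) \<le> \<bar>x - y\<bar>"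
proof -
  have "iexp x - iexp y = iexp y * (iexp (x - y) - 1)"
    by (simp add: algebra_simps flip: exp_add)
  then have "cmod (iexp x - iexp y) = cmod (iexp (x - y) - 1)"
    by (simp add: norm_mult norm_exp_i_times)
  also have "\<dots> \<le> \<bar>x - y\<bar>"
    using iexp_approx1[of "x - y" 0] by simp
  finally show ?thesis .
qed

lemma norm_iexp_remainder_div_le:
  assumes "e \<noteq> 0"
  shows "cmod ((iexp (e * y) - 1 - \<i> * of_real (e * y)) / of_real e) \<le> 2 * \<bar>y\<bar>"
proof -
  have "cmod (iexp (e * y) - 1 - \<i> * of_real (e * y)) \<le> 2 * \<bar>e * y\<bar>"
    using iexp_approx2[of "e * y" 1] by (simp add: algebra_simps)
  then have "cmod ((iexp (e * y) - 1 - \<i> * of_real (e * y)) / of_real e) \<le> 2 * \<bar>e * y\<bar> / \<bar>e\<bar>"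
    unfolding norm_divide using assms by (simp add: divide_right_mono)
  also have "\<dots> = 2 * \<bar>y\<bar>"
    using assms by (simp add: abs_mult)
  finally show ?thesis .
qed

lemma iexp_remainder_div_tendsto_0:
  assumes e: "e \<longlonglongrightarrow> 0" and e_ne_0: "\<And>n. e n \<noteq> 0"
  shows "(\<lambda>n. (iexp (e n * y) - 1 - \<i> * of_real (e n * y)) / of_real (e n)) \<longlonglongrightarrow> 0"
proof (rule Lim_null_comparison)
  have "cmod ((iexp (e n * y) - 1 - \<i> * of_real (e n * y)) / of_real (e n)) \<le> \<bar>e n\<bar> * y\<^sup>2 / 2" for n
  proof -
    have "cmod (iexp (e n * y) - 1 - \<i> * of_real (e n * y)) \<le> \<bar>e n * y\<bar>^2 / 2"
      using iexp_approx1[of "e n * y" 1] by (simp add: algebra_simps power2_eq_square)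
    then have "cmod ((iexp (e n * y) - 1 - \<i> * of_real (e n * y)) / of_real (e n))
        \<le> \<bar>e n * y\<bar>^2 / 2 / \<bar>e n\<bar>"
      unfolding norm_divide norm_of_real by (rule divide_right_mono) simp
    also have "\<dots> = \<bar>e n\<bar> * y\<^sup>2 / 2"
      using e_ne_0[of n] by (simp add: power2_eq_square abs_mult)
    finally show ?thesis .
  qed
  then show "\<forall>\<^sub>F n in sequentially.
      norm ((iexp (e n * y) - 1 - \<i> * of_real (e n * y)) / of_real (e n)) \<le> \<bar>e n\<bar> * y\<^sup>2 / 2"
    by (auto intro: always_eventually)
  have "(\<lambda>n. \<bar>e n\<bar> * y\<^sup>2 / 2) \<longlonglongrightarrow> 0 * y\<^sup>2 / 2"
    using e by (intro tendsto_intros) (auto intro: tendsto_rabs_zero)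
  then show "(\<lambda>n. \<bar>e n\<bar> * y\<^sup>2 / 2) \<longlonglongrightarrow> 0"
    by simp
qed

lemma eq_of_norm_le_1_of_Re_cnj_mult_eq_1:
  fixes x p :: complex
  assumes "cmod x \<le> 1" "cmod p = 1" "Re (cnj p * x) = 1"
  shows "x = p"
proof -
  have "(cmod x)\<^sup>2 \<le> 1"
    using assms(1) by (simp add: power_le_one)
  then have "(Re x)\<^sup>2 + (Im x)\<^sup>2 \<le> 1"
    by (simp add: cmod_power2)
  moreover have "(Re p)\<^sup>2 + (Im p)\<^sup>2 = 1"
    using assms(2) cmod_power2[of p] by simp
  moreover have "Re p * Re x + Im p * Im x = 1"
    using assms(3) by simp
  ultimately have "(Re x - Re p)\<^sup>2 + (Im x - Im p)\<^sup>2 \<le> 0"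
    by (simp add: power2_eq_square algebra_simps)
  then show ?thesis
    by (simp add: complex_eq_iff sum_power2_le_zero_iff)
qed

lemma prod_divide_Suc_telescope: "(\<Prod>j\<in>{1..n}. real j / (real j + 1)) = 1 / (real n + 1)"
  by (induction n) (auto simp: field_simps)

lemma of_nat_mult_prod_ne_1:
  fixes r :: real
  assumes r: "0 < r" "r \<noteq> 1" and m: "m \<ge> 2"
  shows "real m * (\<Prod>j\<in>{1..m-1}. real j / (real j + r)) \<noteq> 1"
proof -
  have one: "real m * (\<Prod>j\<in>{1..m-1}. real j / (real j + 1)) = 1"
    using m by (subst prod_divide_Suc_telescope) (auto simp: of_nat_diff)
  have mem: "1 \<in> {1..m-1}" using m by auto
  have "(\<Prod>j\<in>{1..m-1}. real j / (real j + r)) \<noteq> (\<Prod>j\<in>{1..m-1}. real j / (real j + 1))"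
  proof (cases "r < 1")
    case True
    have "(\<Prod>j\<in>{1..m-1}. real j / (real j + 1)) < (\<Prod>j\<in>{1..m-1}. real j / (real j + r))"
      by (rule prod_mono_strict[OF mem]) (use True r in \<open>auto simp: frac_le divide_strict_left_mono\<close>)
    then show ?thesis by simp
  next
    case False
    then have "(\<Prod>j\<in>{1..m-1}. real j / (real j + r)) < (\<Prod>j\<in>{1..m-1}. real j / (real j + 1))"
      by (intro prod_mono_strict[OF mem]) (use r in \<open>auto simp: frac_le divide_strict_left_mono\<close>)
    then show ?thesis by simp
  qed
  with one m show ?thesis
    by (metis mult_cancel_left of_nat_eq_0_iff not_numeral_le_zero)
qed

section \<open>The real inner product on \<open>\<complex>\<close>\<close>

lemma abs_cinner_le: "\<bar>cinner t z\<bar> \<le> cmod t * cmod z"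
  unfolding cinner_def by (metis abs_Re_le_cmod complex_mod_cnj norm_mult)

lemma cinner_of_real_mult_left: "cinner (complex_of_real e * w) z = e * cinner w z"
  unfolding cinner_def by (simp add: algebra_simps)

lemma cinner_diff_left: "cinner t z - cinner u z = cinner (t - u) z"
  unfolding cinner_def by (simp add: algebra_simps)

lemma cinner_mult_right: "cinner t (w * z) = cinner (cnj w * t) z"
  unfolding cinner_def by (simp add: mult_ac)

lemma cinner_sum_right: "cinner t (\<Sum>j\<in>A. f j) = (\<Sum>j\<in>A. cinner t (f j))"
  unfolding cinner_def by (simp add: sum_distrib_left Re_sum)

lemma cinner_self: "cinner z z = (cmod z)\<^sup>2"
  unfolding cinner_def cmod_power2 by (simp add: power2_eq_square)

lemma bounded_linear_cinner_right: "bounded_linear (cinner w)"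
  unfolding cinner_def
  by (intro bounded_linear_compose[OF bounded_linear_Re] bounded_linear_mult_right)

lemma cinner_measurable [measurable]:
  "f \<in> borel_measurable N \<Longrightarrow> (\<lambda>x. cinner t (f x)) \<in> borel_measurable N"
  unfolding cinner_def by measurable

lemma cnj_mult_eq_0_of_cinner_eq_0:
  assumes "cinner t w = 0" "cinner (\<i> * t) w = 0"
  shows "cnj t * w = 0"
  using assms by (simp add: cinner_def complex_eq_iff algebra_simps)

section \<open>The law of \<open>T\<close>\<close>

text \<open>The rate is clamped at \<open>1\<close> so that every member of the family, including the unused
  index \<open>0\<close>, is a probability measure; only indices \<open>j \<ge> 1\<close> occur in the law of \<open>T\<close>.\<close>
definition Exp_law :: "nat \<Rightarrow> real measure" where
  "Exp_law j = density lborel (exponential_density (real (max j 1)))"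

lemma prob_space_Exp_law: "prob_space (Exp_law j)"
  unfolding Exp_law_def by (rule prob_space_exponential_density) simp

lemma sets_Exp_law [measurable_cong, simp]: "sets (Exp_law j) = sets borel"
  by (simp add: Exp_law_def)

lemma space_Exp_law [simp]: "space (Exp_law j) = UNIV"
  by (simp add: Exp_law_def)

interpretation Exp_laws: product_sigma_finite Exp_law
  unfolding product_sigma_finite_def
  by (intro allI prob_space_imp_sigma_finite prob_space_Exp_law)

lemma Exp_law_exp_moment:
  assumes "c < 1"
  shows "integrable (Exp_law j) (\<lambda>x. exp (c * x))"
    and "integral\<^sup>L (Exp_law j) (\<lambda>x. exp (c * x)) = real (max j 1) / (real (max j 1) - c)"
proof -
  have "has_bochner_integral lborel (\<lambda>x. exponential_density (real (max j 1)) x * exp (c * x))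
      (real (max j 1) / (real (max j 1) - c))"
    using assms by (intro has_bochner_integral_exponential_density_mult_exp) auto
  then show "integrable (Exp_law j) (\<lambda>x. exp (c * x))"
    and "integral\<^sup>L (Exp_law j) (\<lambda>x. exp (c * x)) = real (max j 1) / (real (max j 1) - c)"
    unfolding Exp_law_def has_bochner_integral_iff
    by (simp_all add: integrable_density integral_density exponential_density_nonneg)
qed

lemma T_law_eq_distr_sum: "T_law m = distr (PiM {1..m-1} Exp_law) borel (\<lambda>x. \<Sum>j\<in>{1..m-1}. x j)"
  unfolding T_law_def
  by (rule arg_cong[where f = "\<lambda>N. distr N borel _"], rule PiM_cong) (auto simp: Exp_law_def max_def)

lemma prob_space_T_law: "prob_space (T_law m)"
  unfolding T_law_eq_distr_sum
  by (intro prob_space.prob_space_distr prob_space_PiM prob_space_Exp_law) simp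

interpretation T_law: prob_space "T_law m" for m
  by (rule prob_space_T_law)

lemma measure_T_law_UNIV [simp]: "measure (T_law m) UNIV = 1"
  using T_law.prob_space by (simp add: T_law_eq_distr_sum)

lemma sets_T_law [measurable_cong, simp]: "sets (T_law m) = sets borel"
  by (simp add: T_law_eq_distr_sum)

lemma space_T_law [simp]: "space (T_law m) = UNIV"
  by (simp add: T_law_eq_distr_sum)

lemma continuous_on_imp_borel_measurable_T_law:
  "continuous_on UNIV f \<Longrightarrow> f \<in> borel_measurable (T_law m)"
  using borel_measurable_continuous_onI by (simp cong: measurable_cong_sets)

lemma AE_T_law_nonneg: "AE s in T_law m. 0 \<le> s"
proof -
  have "AE x in Exp_law j. 0 \<le> x" for j
    unfolding Exp_law_def
    by (subst AE_density) (auto simp: exponential_density_def intro!: AE_I2)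
  then have "AE x in PiM {1..m-1} Exp_law. \<forall>j\<in>{1..m-1}. 0 \<le> x j"
    by (subst AE_ball_countable) (auto intro: AE_PiM_component[OF prob_space_Exp_law])
  then have "AE x in PiM {1..m-1} Exp_law. 0 \<le> (\<Sum>j\<in>{1..m-1}. x j)"
    by eventually_elim (auto intro: sum_nonneg)
  then show ?thesis
    unfolding T_law_eq_distr_sum by (subst AE_distr_iff) auto
qed

lemma T_law_exp_moment:
  assumes c: "c < 1"
  shows "integrable (T_law m) (\<lambda>s. exp (c * s))"
    and "integral\<^sup>L (T_law m) (\<lambda>s. exp (c * s)) = (\<Prod>j\<in>{1..m-1}. real j / (real j - c))"
proof -
  have exp_sum: "exp (c * (\<Sum>j\<in>{1..m-1}. x j)) = (\<Prod>j\<in>{1..m-1}. exp (c * x j))" for x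
    by (simp add: sum_distrib_left exp_sum)
  have "integrable (PiM {1..m-1} Exp_law) (\<lambda>x. \<Prod>j\<in>{1..m-1}. exp (c * x j))"
    by (rule Exp_laws.product_integrable_prod) (auto intro: Exp_law_exp_moment[OF c])
  then have "integrable (PiM {1..m-1} Exp_law) (\<lambda>x. exp (c * (\<Sum>j\<in>{1..m-1}. x j)))"
    unfolding exp_sum .
  then show "integrable (T_law m) (\<lambda>s. exp (c * s))"
    unfolding T_law_eq_distr_sum by (subst integrable_distr_eq) simp_all
  have "integral\<^sup>L (T_law m) (\<lambda>s. exp (c * s))
      = (\<integral>x. (\<Prod>j\<in>{1..m-1}. exp (c * x j)) \<partial>PiM {1..m-1} Exp_law)"
    unfolding T_law_eq_distr_sum by (subst integral_distr) (simp_all only: exp_sum, simp_all)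
  also have "\<dots> = (\<Prod>j\<in>{1..m-1}. integral\<^sup>L (Exp_law j) (\<lambda>x. exp (c * x)))"
    by (rule Exp_laws.product_integral_prod) (auto intro: Exp_law_exp_moment[OF c])
  also have "\<dots> = (\<Prod>j\<in>{1..m-1}. real j / (real j - c))"
    by (rule prod.cong) (auto simp: Exp_law_exp_moment[OF c] max_def)
  finally show "integral\<^sup>L (T_law m) (\<lambda>s. exp (c * s)) = (\<Prod>j\<in>{1..m-1}. real j / (real j - c))" .
qed

lemma T_law_exp_moment_pos: "c < 1 \<Longrightarrow> 0 < integral\<^sup>L (T_law m) (\<lambda>s. exp (c * s))"
  by (auto simp: T_law_exp_moment(2) intro!: prod_pos divide_pos_pos)

lemma of_nat_mult_T_law_exp_moment_ne_1:
  assumes "0 < r" "r \<noteq> 1" "m \<ge> 2"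
  shows "real m * integral\<^sup>L (T_law m) (\<lambda>s. exp (- r * s)) \<noteq> 1"
proof -
  have "integral\<^sup>L (T_law m) (\<lambda>s. exp (- r * s)) = (\<Prod>j\<in>{1..m-1}. real j / (real j + r))"
    using T_law_exp_moment(2)[of "- r" m] assms(1) by simp
  with of_nat_mult_prod_ne_1[OF assms] show ?thesis by simp
qed

lemma power_mult_T_law_exp_moment_less_1:
  assumes c: "0 < c" "c < 1" and m: "m \<ge> 2"
  shows "(1 - c) ^ (m-1) * integral\<^sup>L (T_law m) (\<lambda>s. exp (c/2 * s)) < 1"
proof -
  have "integral\<^sup>L (T_law m) (\<lambda>s. exp (c/2 * s)) = (\<Prod>j\<in>{1..m-1}. real j / (real j - c/2))"
    using c by (intro T_law_exp_moment(2)) simp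
  then have "(1 - c) ^ (m-1) * integral\<^sup>L (T_law m) (\<lambda>s. exp (c/2 * s))
      = (\<Prod>j\<in>{1..m-1}. (1 - c) * (real j / (real j - c/2)))"
    by (simp only: prod.distrib prod_constant card_atLeastAtMost) simp
  also have "\<dots> < (\<Prod>j\<in>{1..m-1}. 1)"
  proof (rule prod_mono_strict[of 1])
    show "(1 - c) * (real 1 / (real 1 - c/2)) < 1"
      using c by (simp add: field_simps)
    fix j assume "j \<in> {1..m-1}"
    then have j: "1 \<le> real j" by auto
    then have "(1 - c) * real j \<le> real j - c/2"
      using c by (simp add: algebra_simps)
    then show "0 \<le> (1 - c) * (real j / (real j - c/2)) \<and> (1 - c) * (real j / (real j - c/2)) \<le> 1"
      using c j by (simp add: field_simps)
  qed (use m in auto)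
  finally show ?thesis by simp
qed

lemma emeasure_T_law_Ioc_pos:
  assumes m: "m \<ge> 2" and ab: "0 \<le> a" "a < b"
  shows "0 < emeasure (T_law m) {a<..b}"
proof -
  define n where "n = real (m - 1)"
  have n: "0 < n" using m by (simp add: n_def)
  let ?B = "PiE {1..m-1} (\<lambda>_. {a/n<..b/n})"
  have "?B \<subseteq> (\<lambda>x. \<Sum>j\<in>{1..m-1}. x j) -` {a<..b} \<inter> space (PiM {1..m-1} Exp_law)"
  proof
    fix x assume x: "x \<in> ?B"
    have "a = (\<Sum>j\<in>{1..m-1}. a/n)" using n by (simp add: n_def)
    also have "\<dots> < (\<Sum>j\<in>{1..m-1}. x j)"
      using x m by (intro sum_strict_mono) auto
    finally have "a < (\<Sum>j\<in>{1..m-1}. x j)" .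
    moreover have "(\<Sum>j\<in>{1..m-1}. x j) \<le> (\<Sum>j\<in>{1..m-1}. b/n)"
      using x by (intro sum_mono) auto
    moreover have "(\<Sum>j\<in>{1..m-1}. b/n) = b" using n by (simp add: n_def)
    ultimately show "x \<in> (\<lambda>x. \<Sum>j\<in>{1..m-1}. x j) -` {a<..b} \<inter> space (PiM {1..m-1} Exp_law)"
      using x by (auto simp: space_PiM PiE_def Pi_def)
  qed
  then have "emeasure (PiM {1..m-1} Exp_law) ?B \<le> emeasure (T_law m) {a<..b}"
    unfolding T_law_eq_distr_sum by (subst emeasure_distr) (auto intro!: emeasure_mono)
  moreover have "emeasure (PiM {1..m-1} Exp_law) ?B = (\<Prod>j\<in>{1..m-1}. emeasure (Exp_law j) {a/n<..b/n})"
    by (rule Exp_laws.emeasure_PiM) auto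
  moreover have "0 < (\<Prod>j\<in>{1..m-1}. emeasure (Exp_law j) {a/n<..b/n})"
    unfolding Exp_law_def using ab n
    by (intro prod_ennreal_pos emeasure_exponential_density_Ioc_pos) (auto simp: divide_strict_right_mono)
  ultimately show ?thesis by simp
qed

lemma continuous_AE_T_law_eq_0:
  fixes h :: "real \<Rightarrow> real"
  assumes m: "m \<ge> 2" and h: "continuous_on UNIV h" and AE: "AE s in T_law m. h s = 0"
    and s: "0 \<le> s"
  shows "h s = 0"
proof (rule ccontr)
  assume "h s \<noteq> 0"
  moreover have "isCont h s"
    using h by (simp add: continuous_on_eq_continuous_at)
  ultimately obtain d where d: "0 < d" "\<And>x. dist s x < d \<Longrightarrow> h x \<noteq> 0"
    using continuous_at_avoid[of s h 0] by (auto simp: isCont_def continuous_at)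
  have "0 < emeasure (T_law m) {s<..s + d/2}"
    using emeasure_T_law_Ioc_pos[OF m s] d by simp
  then obtain x where "x \<in> {s<..s + d/2}" "h x = 0"
    using bex_of_AE_of_emeasure_pos[OF AE, of "{s<..s + d/2}"] by auto
  with d show False by (auto simp: dist_real_def)
qed

lemma exists_measure_T_law_atMost_gt:
  assumes "p < 1"
  shows "\<exists>S. p < measure (T_law m) {..S}"
proof -
  have "(\<lambda>n. measure (T_law m) {..real n}) \<longlonglongrightarrow> measure (T_law m) (\<Union>n. {..real n})"
    by (rule T_law.finite_Lim_measure_incseq) (auto simp: incseq_def)
  moreover have "(\<Union>n. {..real n}) = UNIV"
    by (auto intro: real_nat_ceiling_ge)
  ultimately have "(\<lambda>n. measure (T_law m) {..real n}) \<longlonglongrightarrow> 1"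
    by simp
  then have "eventually (\<lambda>n. p < measure (T_law m) {..real n}) sequentially"
    using assms by (rule order_tendstoD(1))
  then show ?thesis
    by (auto simp: eventually_sequentially)
qed

section \<open>The characteristic function of a fixed point\<close>

locale fixpoint_law = prob_space M
  for M :: "'a measure" and Z :: "'a \<Rightarrow> complex" and m :: nat and lam :: complex +
  assumes m_ge_2: "m \<ge> 2" and lam_ne_1: "lam \<noteq> 1" and Re_lam_pos: "Re lam > 0"
    and Z_measurable [measurable]: "Z \<in> borel_measurable M"
    and integrable_Z: "integrable M Z"
    and mean_ne_0: "(\<integral>x. Z x \<partial>M) \<noteq> 0"
    and fixpoint: "distr M borel Z = fixpoint_rhs_law m lam (distr M borel Z)"
begin

definition phi :: "complex \<Rightarrow> complex" where
  "phi t = (\<integral>x. iexp (cinner t (Z x)) \<partial>M)"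

definition mu :: complex where
  "mu = (\<integral>x. Z x \<partial>M)"

definition abs_mean :: real where
  "abs_mean = (\<integral>x. cmod (Z x) \<partial>M)"

text \<open>The conjugate of \<open>e^(-lam s)\<close>: by \<open>cinner_mult_right\<close> the factor \<open>e^(-lam s)\<close> in front
  of \<open>Z\<close> becomes the factor \<open>kappa s\<close> in front of the frequency.\<close>
definition kappa :: "real \<Rightarrow> complex" where
  "kappa s = exp (- cnj lam * of_real s)"

definition psi :: "real \<Rightarrow> real" where
  "psi r = (SUP t\<in>sphere 0 r. cmod (phi t))"

abbreviation law_Z :: "complex measure" where
  "law_Z \<equiv> distr M borel Z"

lemma mu_ne_0: "mu \<noteq> 0"
  using mean_ne_0 by (simp add: mu_def)

lemma abs_mean_nonneg: "0 \<le> abs_mean"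
  unfolding abs_mean_def by simp

lemma integrable_iexp_cinner: "integrable M (\<lambda>x. iexp (cinner t (Z x)))"
  by (rule integrable_const_bound[of _ 1]) (auto simp: norm_exp_i_times)

lemma norm_phi_le_1: "cmod (phi t) \<le> 1"
proof -
  have "cmod (phi t) \<le> (\<integral>x. cmod (iexp (cinner t (Z x))) \<partial>M)"
    unfolding phi_def by (rule integral_norm_bound)
  then show ?thesis
    by (simp add: norm_exp_i_times prob_space)
qed

lemma phi_0 [simp]: "phi 0 = 1"
  by (simp add: phi_def cinner_def prob_space)

lemma norm_phi_diff_le: "cmod (phi t - phi u) \<le> abs_mean * cmod (t - u)"
proof -
  have "phi t - phi u = (\<integral>x. iexp (cinner t (Z x)) - iexp (cinner u (Z x)) \<partial>M)"
    unfolding phi_def by (simp add: integrable_iexp_cinner)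
  then have "cmod (phi t - phi u) \<le> (\<integral>x. cmod (iexp (cinner t (Z x)) - iexp (cinner u (Z x))) \<partial>M)"
    by (simp add: integral_norm_bound)
  also have "\<dots> \<le> (\<integral>x. cmod (t - u) * cmod (Z x) \<partial>M)"
  proof (rule integral_mono)
    fix x
    have "cmod (iexp (cinner t (Z x)) - iexp (cinner u (Z x))) \<le> \<bar>cinner (t - u) (Z x)\<bar>"
      using norm_iexp_diff_le[of "cinner t (Z x)" "cinner u (Z x)"] by (simp only: cinner_diff_left)
    also have "\<dots> \<le> cmod (t - u) * cmod (Z x)"
      by (rule abs_cinner_le)
    finally show "cmod (iexp (cinner t (Z x)) - iexp (cinner u (Z x))) \<le> cmod (t - u) * cmod (Z x)" .
  next
    show "integrable M (\<lambda>x. cmod (iexp (cinner t (Z x)) - iexp (cinner u (Z x))))"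
      by (intro integrable_norm Bochner_Integration.integrable_diff integrable_iexp_cinner)
    show "integrable M (\<lambda>x. cmod (t - u) * cmod (Z x))"
      using integrable_Z by simp
  qed
  finally show ?thesis
    by (simp add: abs_mean_def mult.commute)
qed

lemma norm_phi_sub_1_le: "cmod (phi t - 1) \<le> abs_mean * cmod t"
  using norm_phi_diff_le[of t 0] by simp

lemma continuous_on_phi: "continuous_on A phi"
proof (rule lipschitz_on_continuous_on)
  show "abs_mean-lipschitz_on A phi"
    using norm_phi_diff_le abs_mean_nonneg by (intro lipschitz_onI) (auto simp: dist_norm)
qed

lemma isCont_phi: "isCont phi t"
  using continuous_on_phi[of UNIV] by (simp add: continuous_on_eq_continuous_at)

lemma integral_cinner_Z: "(\<integral>x. cinner w (Z x) \<partial>M) = cinner w mu"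
  unfolding mu_def by (rule integral_bounded_linear[OF bounded_linear_cinner_right integrable_Z])

lemma phi_difference_quotient_tendsto:
  assumes e: "e \<longlonglongrightarrow> 0" and e_ne_0: "\<And>n. e n \<noteq> 0"
  shows "(\<lambda>n. (phi (of_real (e n) * w) - 1) / of_real (e n)) \<longlonglongrightarrow> \<i> * of_real (cinner w mu)"
proof -
  define c where "c x = cinner w (Z x)" for x
  have c_measurable [measurable]: "c \<in> borel_measurable M"
    unfolding c_def by measurable
  define s where "s n x = (iexp (e n * c x) - 1 - \<i> * of_real (e n * c x)) / of_real (e n)" for n x
  have s_measurable [measurable]: "s n \<in> borel_measurable M" for n
    unfolding s_def by measurable
  have s_bound: "cmod (s n x) \<le> 2 * cmod w * cmod (Z x)" for n x
    using norm_iexp_remainder_div_le[OF e_ne_0, of n "c x"] abs_cinner_le[of w "Z x"]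
    by (simp add: s_def c_def)
  have s_tendsto: "(\<lambda>n. s n x) \<longlonglongrightarrow> 0" for x
    unfolding s_def by (rule iexp_remainder_div_tendsto_0[OF e e_ne_0])
  have "(\<lambda>n. integral\<^sup>L M (s n)) \<longlonglongrightarrow> integral\<^sup>L M (\<lambda>x. 0)"
    by (rule integral_dominated_convergence[where w = "\<lambda>x. 2 * cmod w * cmod (Z x)"])
      (use integrable_Z s_bound s_tendsto in auto)
  moreover have "integral\<^sup>L M (s n)
      = (phi (of_real (e n) * w) - 1) / of_real (e n) - \<i> * of_real (cinner w mu)" for n
  proof -
    have "integrable M c"
      unfolding c_def by (rule integrable_bounded_linear[OF bounded_linear_cinner_right integrable_Z])
    moreover have "integrable M (\<lambda>x. iexp (e n * c x))"
      using integrable_iexp_cinner[of "of_real (e n) * w"] by (simp add: c_def cinner_of_real_mult_left)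
    ultimately have "integral\<^sup>L M (s n) = ((\<integral>x. iexp (e n * c x) \<partial>M) - (\<integral>x. 1 \<partial>M)
        - (\<integral>x. \<i> * of_real (e n * c x) \<partial>M)) / of_real (e n)"
      unfolding s_def by (simp add: Bochner_Integration.integral_diff)
    also have "(\<integral>x. iexp (e n * c x) \<partial>M) = phi (of_real (e n) * w)"
      unfolding phi_def c_def cinner_of_real_mult_left ..
    also have "(\<integral>x. \<i> * of_real (e n * c x) \<partial>M) = \<i> * of_real (e n * cinner w mu)"
      using integral_cinner_Z[of w] by (simp add: c_def)
    finally show ?thesis
      using e_ne_0[of n] by (simp add: prob_space field_simps)
  qed
  ultimately have "(\<lambda>n. (phi (of_real (e n) * w) - 1) / of_real (e n) - \<i> * of_real (cinner w mu)) \<longlonglongrightarrow> 0"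
    by simp
  then show ?thesis
    by (simp add: LIM_zero_iff)
qed

lemma norm_kappa: "cmod (kappa s) = exp (- Re lam * s)"
  unfolding kappa_def by (simp add: norm_exp_eq_Re)

lemma norm_kappa_le_1: "0 \<le> s \<Longrightarrow> cmod (kappa s) \<le> 1"
  using Re_lam_pos by (simp add: norm_kappa)

lemma continuous_on_kappa: "continuous_on A kappa"
  unfolding kappa_def by (intro continuous_intros)

lemma kappa_0 [simp]: "kappa 0 = 1"
  by (simp add: kappa_def)

lemma kappa_add: "kappa (a + b) = kappa a * kappa b"
  unfolding kappa_def by (simp add: algebra_simps flip: exp_add)

lemma kappa_eq_polar: "kappa s = of_real (exp (- Re lam * s)) * iexp (Im lam * s)"
proof -
  have "- cnj lam * of_real s = of_real (- Re lam * s) + \<i> * of_real (Im lam * s)"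
    by (simp add: complex_eq_iff)
  then show ?thesis
    unfolding kappa_def by (simp only: exp_add exp_of_real)
qed

lemma cinner_exp_mult_right: "cinner t (exp (- lam * of_real s) * z) = cinner (kappa s * t) z"
  unfolding cinner_mult_right kappa_def by (simp add: exp_cnj)

lemma continuous_on_phi_kappa_mult: "continuous_on A (\<lambda>s. phi (kappa s * t))"
  by (rule continuous_on_compose2[OF continuous_on_phi[of UNIV]])
    (auto intro: continuous_intros continuous_on_kappa)

lemma phi_kappa_mult_measurable [measurable]: "(\<lambda>s. phi (kappa s * t)) \<in> borel_measurable (T_law m)"
  by (intro continuous_on_imp_borel_measurable_T_law continuous_on_phi_kappa_mult)

lemma integrable_phi_kappa_power: "integrable (T_law m) (\<lambda>s. (phi (kappa s * t)) ^ m)"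
  by (rule T_law.integrable_const_bound[of _ 1]) (auto simp: norm_power norm_phi_le_1 power_le_one)

lemma phi_eq_integral_law_Z: "phi t = (\<integral>z. iexp (cinner t z) \<partial>law_Z)"
  unfolding phi_def by (subst integral_distr) auto

lemma integral_PiM_iexp_cinner_sum:
  "(\<integral>zs. iexp (cinner t (exp (- lam * of_real s) * (\<Sum>j\<in>{1..m}. zs j))) \<partial>PiM {1..m} (\<lambda>_. law_Z))
    = (phi (kappa s * t)) ^ m"
proof -
  interpret law_Z: prob_space law_Z
    by (rule prob_space_distr) simp
  interpret product_sigma_finite "\<lambda>_::nat. law_Z"
    unfolding product_sigma_finite_def by (intro allI prob_space_imp_sigma_finite law_Z.prob_space_axioms)
  have "(\<integral>zs. iexp (cinner t (exp (- lam * of_real s) * (\<Sum>j\<in>{1..m}. zs j))) \<partial>PiM {1..m} (\<lambda>_. law_Z))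
      = (\<integral>zs. (\<Prod>j\<in>{1..m}. iexp (cinner (kappa s * t) (zs j))) \<partial>PiM {1..m} (\<lambda>_. law_Z))"
    by (simp only: cinner_exp_mult_right cinner_sum_right of_real_sum sum_distrib_left
        exp_sum[OF finite_atLeastAtMost])
  also have "\<dots> = (\<Prod>j\<in>{1..m}. (\<integral>z. iexp (cinner (kappa s * t) z) \<partial>law_Z))"
    by (rule product_integral_prod)
      (auto intro: law_Z.integrable_const_bound[of _ 1] simp: norm_exp_i_times)
  finally show ?thesis
    by (simp add: phi_eq_integral_law_Z)
qed

lemma phi_fixpoint_eq: "phi t = (\<integral>s. (phi (kappa s * t)) ^ m \<partial>T_law m)"
proof -
  let ?Q = "T_law m \<Otimes>\<^sub>M PiM {1..m} (\<lambda>_. law_Z)"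
  define G where "G = (\<lambda>(s::real, zs::nat \<Rightarrow> complex). exp (- lam * of_real s) * (\<Sum>j\<in>{1..m}. zs j))"
  interpret Q: prob_space ?Q
    by (intro prob_space_pair prob_space_T_law prob_space_PiM prob_space_distr) simp
  interpret pair_sigma_finite "T_law m" "PiM {1..m} (\<lambda>_. law_Z)"
    by (intro pair_sigma_finite.intro prob_space_imp_sigma_finite prob_space_T_law prob_space_PiM
        prob_space_distr) simp
  have G_measurable [measurable]: "G \<in> borel_measurable ?Q"
    unfolding G_def by measurable
  have "phi t = (\<integral>z. iexp (cinner t z) \<partial>fixpoint_rhs_law m lam law_Z)"
    by (simp add: phi_eq_integral_law_Z flip: fixpoint)
  also have "\<dots> = (\<integral>p. iexp (cinner t (G p)) \<partial>?Q)"
    unfolding fixpoint_rhs_law_def G_def[symmetric] by (rule integral_distr[OF G_measurable]) simp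
  also have "\<dots> = (\<integral>s. (\<integral>zs. iexp (cinner t (G (s, zs))) \<partial>PiM {1..m} (\<lambda>_. law_Z)) \<partial>T_law m)"
    by (intro integral_fst'[symmetric] Q.integrable_const_bound[of _ 1])
      (simp add: norm_exp_i_times, measurable)
  also have "\<dots> = (\<integral>s. (phi (kappa s * t)) ^ m \<partial>T_law m)"
    by (simp only: G_def case_prod_conv integral_PiM_iexp_cinner_sum)
  finally show ?thesis .
qed

lemma norm_phi_power_sub_1_le: "cmod ((phi t) ^ m - 1) \<le> real m * (abs_mean * cmod t)"
proof -
  have "cmod ((phi t) ^ m - 1 ^ m) \<le> real m * cmod (phi t - 1)"
    by (rule norm_power_diff) (auto simp: norm_phi_le_1)
  also have "\<dots> \<le> real m * (abs_mean * cmod t)"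
    by (intro mult_left_mono norm_phi_sub_1_le) simp
  finally show ?thesis by simp
qed

lemma phi_power_difference_quotient_tendsto:
  assumes e: "e \<longlonglongrightarrow> 0" and e_ne_0: "\<And>n. e n \<noteq> 0"
  shows "(\<lambda>n. ((phi (of_real (e n) * w)) ^ m - 1) / of_real (e n))
    \<longlonglongrightarrow> of_nat m * (\<i> * of_real (cinner w mu))"
proof -
  define a where "a n = phi (of_real (e n) * w)" for n
  have D: "(\<lambda>n. (a n - 1) / of_real (e n)) \<longlonglongrightarrow> \<i> * of_real (cinner w mu)"
    unfolding a_def by (rule phi_difference_quotient_tendsto[OF e e_ne_0])
  have "a n = 1 + of_real (e n) * ((a n - 1) / of_real (e n))" for n
    using e_ne_0[of n] by (simp add: field_simps)
  moreover have "(\<lambda>n. 1 + of_real (e n) * ((a n - 1) / of_real (e n)))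
      \<longlonglongrightarrow> 1 + of_real 0 * (\<i> * of_real (cinner w mu))"
    by (intro tendsto_intros e D)
  ultimately have "a \<longlonglongrightarrow> 1"
    by simp
  then have "(\<lambda>n. ((a n - 1) / of_real (e n)) * (\<Sum>i<m. (a n) ^ i))
      \<longlonglongrightarrow> (\<i> * of_real (cinner w mu)) * (\<Sum>i<m. 1 ^ i)"
    by (intro tendsto_intros D)
  then show ?thesis
    unfolding a_def by (simp add: power_diff_1_eq mult_ac)
qed

lemma integral_phi_kappa_power_difference_quotient:
  assumes "h \<noteq> 0"
  shows "(\<integral>s. ((phi (of_real h * (kappa s * v))) ^ m - 1) / of_real h \<partial>T_law m)
    = (phi (of_real h * v) - 1) / of_real h"
proof -
  have comm: "kappa s * (of_real h * v) = of_real h * (kappa s * v)" for s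
    by (simp add: mult_ac)
  have "(\<integral>s. (phi (of_real h * (kappa s * v))) ^ m \<partial>T_law m) = phi (of_real h * v)"
    by (simp only: phi_fixpoint_eq[of "of_real h * v"] comm)
  moreover have "integrable (T_law m) (\<lambda>s. (phi (of_real h * (kappa s * v))) ^ m)"
    using integrable_phi_kappa_power[of "of_real h * v"] by (simp only: comm)
  ultimately show ?thesis
    by (simp add: Bochner_Integration.integral_diff)
qed

lemma norm_phi_kappa_power_difference_quotient_le:
  assumes h: "0 < h" and s: "0 \<le> s"
  shows "cmod (((phi (of_real h * (kappa s * v))) ^ m - 1) / of_real h) \<le> real m * (abs_mean * cmod v)"
proof -
  have "cmod (of_real h * (kappa s * v)) \<le> h * cmod v"
    using norm_kappa_le_1[OF s] h by (simp add: norm_mult mult_left_le_one_le mult_left_mono)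
  then have "cmod ((phi (of_real h * (kappa s * v))) ^ m - 1) \<le> real m * (abs_mean * (h * cmod v))"
    using norm_phi_power_sub_1_le order_trans abs_mean_nonneg
    by (blast intro: mult_left_mono of_nat_0_le_iff)
  then show ?thesis
    unfolding norm_divide using h by (simp add: field_simps)
qed

text \<open>The derivative at \<open>0\<close> of both sides of \<open>phi_fixpoint_eq\<close>.\<close>
lemma mean_identity: "cinner v mu = real m * (\<integral>s. cinner (kappa s * v) mu \<partial>T_law m)"
proof -
  define e :: "nat \<Rightarrow> real" where "e n = inverse (real (Suc n))" for n
  have e: "e \<longlonglongrightarrow> 0"
    unfolding e_def by (rule LIMSEQ_inverse_real_of_nat)
  have e_pos: "0 < e n" for n
    by (simp add: e_def)
  define g where "g n s = ((phi (of_real (e n) * (kappa s * v))) ^ m - 1) / of_real (e n)" for n s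
  have g_measurable [measurable]: "g n \<in> borel_measurable (T_law m)" for n
    unfolding g_def using e_pos[of n]
    by (intro continuous_on_imp_borel_measurable_T_law continuous_intros
        continuous_on_compose2[OF continuous_on_phi[of UNIV]] continuous_on_kappa) auto
  have "integral\<^sup>L (T_law m) (g n) = (phi (of_real (e n) * v) - 1) / of_real (e n)" for n
    unfolding g_def using e_pos[of n] by (intro integral_phi_kappa_power_difference_quotient) simp
  then have "(\<lambda>n. integral\<^sup>L (T_law m) (g n)) \<longlonglongrightarrow> \<i> * of_real (cinner v mu)"
    using phi_difference_quotient_tendsto[OF e] e_pos by (simp add: less_imp_neq[symmetric])
  moreover have "(\<lambda>n. integral\<^sup>L (T_law m) (g n))
      \<longlonglongrightarrow> (\<integral>s. of_nat m * (\<i> * of_real (cinner (kappa s * v) mu)) \<partial>T_law m)"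
  proof (rule integral_dominated_convergence[where w = "\<lambda>_. real m * (abs_mean * cmod v)"])
    show "AE s in T_law m. (\<lambda>n. g n s) \<longlonglongrightarrow> of_nat m * (\<i> * of_real (cinner (kappa s * v) mu))"
      unfolding g_def using phi_power_difference_quotient_tendsto[OF e] e_pos
      by (simp add: less_imp_neq[symmetric])
    show "AE s in T_law m. cmod (g n s) \<le> real m * (abs_mean * cmod v)" for n
      using AE_T_law_nonneg
      by eventually_elim (simp add: g_def norm_phi_kappa_power_difference_quotient_le e_pos)
    show "(\<lambda>s. of_nat m * (\<i> * of_real (cinner (kappa s * v) mu))) \<in> borel_measurable (T_law m)"
      unfolding cinner_def
      by (intro continuous_on_imp_borel_measurable_T_law continuous_intros continuous_on_kappa)
  qed simp_all
  ultimately have "\<i> * of_real (cinner v mu) = (\<integral>s. of_nat m * (\<i> * of_real (cinner (kappa s * v) mu)) \<partial>T_law m)"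
    by (rule LIMSEQ_unique)
  then have "complex_of_real (cinner v mu) = complex_of_real (real m * (\<integral>s. cinner (kappa s * v) mu \<partial>T_law m))"
    by (simp add: mult.left_commute)
  then show ?thesis
    by (simp only: of_real_eq_iff)
qed

lemma Im_lam_ne_0: "Im lam \<noteq> 0"
proof
  assume "Im lam = 0"
  then have lam: "lam = of_real (Re lam)"
    by (simp add: complex_eq_iff)
  have "kappa s = of_real (exp (- Re lam * s))" for s
    unfolding kappa_def by (subst lam) (simp flip: exp_of_real)
  then have "cinner mu mu = real m * (\<integral>s. exp (- Re lam * s) \<partial>T_law m) * cinner mu mu"
    using mean_identity[of mu] by (simp add: cinner_of_real_mult_left)
  moreover have "cinner mu mu \<noteq> 0"
    using mu_ne_0 by (simp add: cinner_self)
  ultimately have "real m * (\<integral>s. exp (- Re lam * s) \<partial>T_law m) = 1"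
    by simp
  moreover have "Re lam \<noteq> 1"
    using lam_ne_1 lam by auto
  ultimately show False
    using of_nat_mult_T_law_exp_moment_ne_1 Re_lam_pos m_ge_2 by blast
qed

text \<open>A unit-modulus value of \<open>phi\<close> is an average of values of modulus at most \<open>1\<close>, so all of
  these must coincide with it; continuity and the full support of the law of \<open>T\<close> upgrade
  ``almost every \<open>s\<close>'' to ``every \<open>s \<ge> 0\<close>''.\<close>
lemma phi_kappa_power_eq_of_norm_phi_eq_1:
  assumes t: "cmod (phi t) = 1" and s: "0 \<le> s"
  shows "(phi (kappa s * t)) ^ m = phi t"
proof -
  define X where "X s = (phi (kappa s * t)) ^ m" for s
  define h where "h s = 1 - Re (cnj (phi t) * X s)" for s
  have norm_X: "cmod (X s) \<le> 1" for s
    unfolding X_def by (simp add: norm_power norm_phi_le_1 power_le_one)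
  have "\<bar>Re (cnj (phi t) * X s)\<bar> \<le> 1" for s
    using abs_Re_le_cmod[of "cnj (phi t) * X s"] norm_X[of s] t by (simp add: norm_mult)
  then have h_bounds: "0 \<le> h s" "h s \<le> 2" for s
    unfolding h_def by (auto simp: abs_le_iff)
  have h_cont: "continuous_on UNIV h"
    unfolding h_def X_def by (intro continuous_intros continuous_on_phi_kappa_mult)
  have integrable_X: "integrable (T_law m) X"
    unfolding X_def by (rule integrable_phi_kappa_power)
  have "integral\<^sup>L (T_law m) h = 1 - Re (cnj (phi t) * integral\<^sup>L (T_law m) X)"
    unfolding h_def using integrable_X by (simp add: Bochner_Integration.integral_diff integral_Re)
  also have "integral\<^sup>L (T_law m) X = phi t"
    unfolding X_def by (rule phi_fixpoint_eq[symmetric])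
  also have "1 - Re (cnj (phi t) * phi t) = 0"
    using t cinner_self[of "phi t"] by (simp add: cinner_def)
  finally have "integral\<^sup>L (T_law m) h = 0" .
  moreover have "integrable (T_law m) h"
    using h_bounds
    by (intro T_law.integrable_const_bound[of _ 2] continuous_on_imp_borel_measurable_T_law h_cont) auto
  ultimately have "AE s in T_law m. h s = 0"
    using h_bounds by (subst integral_nonneg_eq_0_iff_AE[symmetric]) auto
  then have "h s = 0"
    by (rule continuous_AE_T_law_eq_0[OF m_ge_2 h_cont _ s])
  then show ?thesis
    using norm_X t unfolding h_def X_def by (intro eq_of_norm_le_1_of_Re_cnj_mult_eq_1) auto
qed

lemma phi_kappa_eq_1_of_norm_phi_eq_1:
  assumes t: "cmod (phi t) = 1" and s: "0 \<le> s"
  shows "phi (kappa s * t) = 1"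
proof -
  have phi_kappa_eq: "phi (kappa s * t) = phi t" if s: "0 \<le> s" for s
  proof -
    have pow: "(phi (kappa s * t)) ^ m = phi t"
      by (rule phi_kappa_power_eq_of_norm_phi_eq_1[OF t s])
    have "cmod (phi (kappa s * t)) ^ m = 1 ^ m"
      unfolding norm_power[symmetric] pow using t by simp
    then have "cmod (phi (kappa s * t)) = 1"
      using m_ge_2 by (subst (asm) power_eq_iff_eq_base) auto
    from phi_kappa_power_eq_of_norm_phi_eq_1[OF this order_refl]
    have "(phi (kappa s * t)) ^ m = phi (kappa s * t)"
      by simp
    with pow show ?thesis by simp
  qed
  have "(\<lambda>n. cmod (kappa (real n) * t)) \<longlonglongrightarrow> 0 * cmod t"
    unfolding norm_mult norm_kappa
    by (intro tendsto_intros LIMSEQ_exp_neg_mult_of_nat Re_lam_pos)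
  then have "(\<lambda>n. kappa (real n) * t) \<longlonglongrightarrow> 0"
    by (simp add: tendsto_norm_zero_iff)
  then have "(\<lambda>n. phi (kappa (real n) * t)) \<longlonglongrightarrow> phi 0"
    by (rule isCont_tendsto_compose[OF isCont_phi])
  then have "phi t = 1"
    using phi_kappa_eq by (simp add: LIMSEQ_const_iff)
  with phi_kappa_eq[OF s] show ?thesis by simp
qed

text \<open>Along \<open>s0 + n d\<close> with \<open>d = 2 pi / |Im lam|\<close>, the frequency \<open>kappa s * t\<close> shrinks to \<open>0\<close>
  in the fixed direction \<open>kappa s0 * t\<close>, where \<open>phi = 1\<close>; so the derivative of \<open>phi\<close> there vanishes.\<close>
lemma cinner_kappa_mu_eq_0_of_norm_phi_eq_1:
  assumes t: "cmod (phi t) = 1" and s0: "0 \<le> s0"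
  shows "cinner (kappa s0 * t) mu = 0"
proof -
  define d where "d = 2 * pi / \<bar>Im lam\<bar>"
  have d: "0 < d"
    using Im_lam_ne_0 by (simp add: d_def)
  define e where "e n = exp (- Re lam * (real n * d))" for n
  have e_pos: "0 < e n" for n
    by (simp add: e_def)
  have "(\<lambda>n. exp (- (Re lam * d) * real n)) \<longlonglongrightarrow> 0"
    using Re_lam_pos d by (intro LIMSEQ_exp_neg_mult_of_nat) simp
  then have e: "e \<longlonglongrightarrow> 0"
    unfolding e_def by (simp add: mult_ac)
  have "iexp (Im lam * (real n * d)) = 1" for n
  proof -
    have "Im lam * (real n * d) = 2 * pi * (sgn (Im lam) * real n)"
      using Im_lam_ne_0 by (auto simp: d_def sgn_if)
    then have "iexp (Im lam * (real n * d)) = cis (2 * pi * (sgn (Im lam) * real n))"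
      by (simp only: cis_conv_exp)
    moreover have "sgn (Im lam) * real n \<in> \<int>"
      by (simp add: sgn_if)
    ultimately show ?thesis by simp
  qed
  then have kappa_shift: "kappa (s0 + real n * d) * t = of_real (e n) * (kappa s0 * t)" for n
    unfolding kappa_add kappa_eq_polar[of "real n * d"] by (simp add: e_def mult_ac)
  have "phi (of_real (e n) * (kappa s0 * t)) = 1" for n
  proof -
    have "0 \<le> s0 + real n * d"
      using s0 d by simp
    from phi_kappa_eq_1_of_norm_phi_eq_1[OF t this] show ?thesis
      by (simp only: kappa_shift)
  qed
  then have "(\<lambda>n. 0) \<longlonglongrightarrow> \<i> * of_real (cinner (kappa s0 * t) mu)"
    using phi_difference_quotient_tendsto[OF e, of "kappa s0 * t"] e_pos
    by (simp add: less_imp_neq[symmetric])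
  then show ?thesis
    by (simp add: LIMSEQ_const_iff)
qed

lemma norm_phi_less_1:
  assumes t: "t \<noteq> 0"
  shows "cmod (phi t) < 1"
proof (rule ccontr)
  assume "\<not> cmod (phi t) < 1"
  then have t1: "cmod (phi t) = 1"
    using norm_phi_le_1[of t] by simp
  define s1 where "s1 = pi / 2 / \<bar>Im lam\<bar>"
  have "iexp (Im lam * s1) = of_real (sgn (Im lam)) * \<i>"
  proof (cases "Im lam > 0")
    case True
    then have "Im lam * s1 = pi / 2"
      by (simp add: s1_def)
    then have "iexp (Im lam * s1) = cis (pi / 2)"
      by (simp only: cis_conv_exp)
    with True show ?thesis by simp
  next
    case False
    then have "Im lam * s1 = - (pi / 2)"
      using Im_lam_ne_0 by (simp add: s1_def)
    then have "iexp (Im lam * s1) = cis (- (pi / 2))"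
      by (simp only: cis_conv_exp)
    with False Im_lam_ne_0 show ?thesis by (simp add: cis_minus_pi_half)
  qed
  then have "cinner (of_real (sgn (Im lam)) * (\<i> * t)) mu = 0"
    using cinner_kappa_mu_eq_0_of_norm_phi_eq_1[OF t1, of s1]
    by (simp add: s1_def kappa_eq_polar mult.assoc cinner_of_real_mult_left)
  then have "cinner (\<i> * t) mu = 0"
    using Im_lam_ne_0 by (auto simp: cinner_of_real_mult_left sgn_if split: if_splits)
  moreover have "cinner t mu = 0"
    using cinner_kappa_mu_eq_0_of_norm_phi_eq_1[OF t1 order_refl] by simp
  ultimately have "cnj t * mu = 0"
    by (intro cnj_mult_eq_0_of_cinner_eq_0)
  then show False
    using t mu_ne_0 by simp
qed

section \<open>The maximum \<open>psi\<close> of \<open>|phi|\<close> on circles\<close>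

lemma bdd_above_norm_phi: "bdd_above ((\<lambda>t. cmod (phi t)) ` A)"
  using norm_phi_le_1 by (intro bdd_aboveI[of _ 1]) auto

lemma psi_attained:
  assumes "0 \<le> r"
  obtains t where "cmod t = r" "psi r = cmod (phi t)"
proof -
  have "sphere (0::complex) r \<noteq> {}"
    using assms by simp
  moreover have "continuous_on (sphere 0 r) (\<lambda>t. cmod (phi t))"
    by (intro continuous_on_norm continuous_on_phi)
  ultimately obtain t where t: "t \<in> sphere 0 r" "\<And>y. y \<in> sphere 0 r \<Longrightarrow> cmod (phi y) \<le> cmod (phi t)"
    using continuous_attains_sup[OF compact_sphere] by blast
  then have "psi r = cmod (phi t)"
    unfolding psi_def by (intro cSup_eq_maximum) auto
  with t show ?thesis
    by (intro that) auto
qed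

lemma norm_phi_le_psi: "cmod (phi t) \<le> psi (cmod t)"
  unfolding psi_def by (rule cSUP_upper[OF _ bdd_above_norm_phi]) simp

lemma psi_nonneg:
  assumes "0 \<le> r"
  shows "0 \<le> psi r"
proof -
  obtain t where "psi r = cmod (phi t)"
    using psi_attained[OF assms] .
  then show ?thesis by simp
qed

lemma psi_less_1:
  assumes "0 < r"
  shows "psi r < 1"
proof -
  from assms have "0 \<le> r" by simp
  then obtain t where "cmod t = r" "psi r = cmod (phi t)"
    by (rule psi_attained)
  with assms show ?thesis
    using norm_phi_less_1[of t] by auto
qed

lemma psi_le_add:
  assumes r: "0 \<le> r" and r': "0 \<le> r'"
  shows "psi r \<le> psi r' + abs_mean * \<bar>r - r'\<bar>"
proof -
  obtain t where t: "cmod t = r" "psi r = cmod (phi t)"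
    using psi_attained[OF r] by blast
  text \<open>A point of modulus \<open>r'\<close> at distance \<open>|r - r'|\<close> from \<open>t\<close>.\<close>
  define t' where "t' = (if r = 0 then of_real r' else of_real (r' / r) * t)"
  have norm_t': "cmod t' = r'"
    using t r r' by (auto simp: t'_def norm_mult norm_divide)
  have "cmod (t - t') = \<bar>r - r'\<bar>"
  proof (cases "r = 0")
    case False
    then have "t - t' = of_real (1 - r' / r) * t"
      by (simp add: t'_def algebra_simps)
    then have "cmod (t - t') = \<bar>1 - r' / r\<bar> * r"
      using t by (simp only: norm_mult norm_of_real)
    also have "\<dots> = \<bar>(r - r') / r\<bar> * r"
      using False by (simp add: diff_divide_distrib)
    also have "\<dots> = \<bar>r - r'\<bar>"
      using False r by (simp add: abs_divide)
    finally show ?thesis .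
  qed (use t r' in \<open>simp add: t'_def\<close>)
  then have "cmod (phi t) \<le> cmod (phi t') + abs_mean * \<bar>r - r'\<bar>"
    using norm_triangle_sub[of "phi t" "phi t'"] norm_phi_diff_le[of t t'] by simp
  then show ?thesis
    using norm_phi_le_psi[of t'] norm_t' t by simp
qed

lemma continuous_on_psi: "continuous_on {0..} psi"
proof (rule lipschitz_on_continuous_on)
  show "abs_mean-lipschitz_on {0..} psi"
  proof (rule lipschitz_onI)
    fix x y :: real assume "x \<in> {0..}" "y \<in> {0..}"
    then have "psi x \<le> psi y + abs_mean * \<bar>x - y\<bar>" "psi y \<le> psi x + abs_mean * \<bar>y - x\<bar>"
      by (auto intro!: psi_le_add)
    then show "dist (psi x) (psi y) \<le> abs_mean * dist x y"
      by (simp add: dist_real_def abs_minus_commute)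
  qed (rule abs_mean_nonneg)
qed

lemma norm_phi_kappa_le_psi: "cmod (phi (kappa s * t)) \<le> psi (exp (- Re lam * s) * cmod t)"
  using norm_phi_le_psi[of "kappa s * t"] by (simp add: norm_mult norm_kappa)

lemma norm_phi_le_integral:
  assumes "AE s in T_law m. (cmod (phi (kappa s * t))) ^ m \<le> g s" "integrable (T_law m) g"
  shows "cmod (phi t) \<le> integral\<^sup>L (T_law m) g"
proof -
  have "cmod (phi t) \<le> (\<integral>s. cmod ((phi (kappa s * t)) ^ m) \<partial>T_law m)"
    by (subst phi_fixpoint_eq) (rule integral_norm_bound)
  also have "\<dots> \<le> integral\<^sup>L (T_law m) g"
    using assms integrable_norm[OF integrable_phi_kappa_power[of t]]
    by (intro integral_mono_AE) (simp_all add: norm_power)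
  finally show ?thesis .
qed

lemma norm_phi_kappa_power_le_of_gap:
  assumes t: "exp (Re lam * S) \<le> cmod t"
    and J: "0 \<le> J" "J \<le> 1/2" and gap: "\<And>y. y \<in> {1..cmod t} \<Longrightarrow> J \<le> 1 - psi y"
    and s: "0 \<le> s" "s \<le> S"
  shows "(cmod (phi (kappa s * t))) ^ m \<le> 1 - 3/2 * J"
proof -
  define r where "r = exp (- Re lam * s) * cmod t"
  have "1 \<le> exp (- Re lam * S) * exp (Re lam * S)"
    by (simp flip: exp_add)
  also have "\<dots> \<le> r"
    unfolding r_def using s Re_lam_pos t by (intro mult_mono) auto
  finally have "1 \<le> r" .
  moreover have "r \<le> cmod t"
    using norm_kappa_le_1[OF s(1)] unfolding norm_kappa r_def by (intro mult_left_le_one_le) auto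
  ultimately have "J \<le> 1 - psi r"
    by (intro gap) simp
  moreover have "cmod (phi (kappa s * t)) \<le> psi r"
    unfolding r_def by (rule norm_phi_kappa_le_psi)
  ultimately show ?thesis
    using J m_ge_2 norm_phi_le_1 by (intro power_le_1_minus_three_halves) auto
qed

text \<open>If \<open>J\<close> is the least gap \<open>1 - psi\<close> on \<open>[1, rs]\<close> and \<open>rs\<close> is large, then the fixed-point
  equation improves the gap at \<open>rs\<close> by a factor \<open>3/2 P(T \<le> S) > 1\<close>.\<close>
lemma psi_less_of_gap:
  assumes S: "2/3 < measure (T_law m) {..S}"
    and rs: "1 \<le> rs" "exp (Re lam * S) \<le> rs"
    and J: "0 < J" "J \<le> 1/2" and gap: "\<And>y. y \<in> {1..rs} \<Longrightarrow> J \<le> 1 - psi y"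
  shows "psi rs < 1 - J"
proof -
  obtain t where t: "cmod t = rs" "psi rs = cmod (phi t)"
    using psi_attained[of rs] rs by auto
  define g where "g s = 1 - 3/2 * J * indicator {..S} s" for s
  have integrable_indicator: "integrable (T_law m) (indicator {..S} :: real \<Rightarrow> real)"
    by (rule T_law.integrable_const_bound[of _ 1]) auto
  have "cmod (phi t) \<le> integral\<^sup>L (T_law m) g"
  proof (rule norm_phi_le_integral)
    show "integrable (T_law m) g"
      unfolding g_def using integrable_indicator by simp
    show "AE s in T_law m. (cmod (phi (kappa s * t))) ^ m \<le> g s"
      using AE_T_law_nonneg
    proof eventually_elim
      case (elim s)
      show ?case
      proof (cases "s \<le> S")
        case True
        then show ?thesis
          using norm_phi_kappa_power_le_of_gap[of S t J s] t rs J gap elim by (simp add: g_def)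
      qed (simp add: g_def norm_phi_le_1 power_le_one)
    qed
  qed
  also have "integral\<^sup>L (T_law m) g = 1 - 3/2 * J * measure (T_law m) {..S}"
    unfolding g_def using integrable_indicator by simp
  also have "\<dots> < 1 - J"
    using S J by simp
  finally show ?thesis
    using t by simp
qed

lemma half_less_one_minus_psi_at_max:
  assumes S: "2/3 < measure (T_law m) {..S}"
    and rs: "1 \<le> rs" "exp (Re lam * S) \<le> rs" and min: "\<And>y. y \<in> {1..rs} \<Longrightarrow> psi y \<le> psi rs"
  shows "1/2 < 1 - psi rs"
proof (rule ccontr)
  assume "\<not> 1/2 < 1 - psi rs"
  moreover have "0 < 1 - psi rs"
    using psi_less_1[of rs] rs by simp
  ultimately have "psi rs < 1 - (1 - psi rs)"
    using min by (intro psi_less_of_gap[OF S rs]) auto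
  then show False by simp
qed

lemma psi_bounded_away_from_1: "\<exists>c>0. c \<le> 1/2 \<and> (\<forall>r\<ge>1. psi r \<le> 1 - c)"
proof -
  obtain S where S: "2/3 < measure (T_law m) {..S}"
    using exists_measure_T_law_atMost_gt[of "2/3" m] by auto
  define R where "R = max 1 (exp (Re lam * S))"
  have psi_cont: "continuous_on A psi" if "A \<subseteq> {0..}" for A
    by (rule continuous_on_subset[OF continuous_on_psi that])
  obtain r0 where r0: "r0 \<in> {1..R}" "\<And>y. y \<in> {1..R} \<Longrightarrow> psi y \<le> psi r0"
    using continuous_attains_sup[OF compact_Icc _ psi_cont[of "{1..R}"]] by (auto simp: R_def)
  define c where "c = min (1 - psi r0) (1/2)"
  have c: "0 < c" "c \<le> 1/2"
    using psi_less_1[of r0] r0 by (auto simp: c_def min_def)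
  have "psi r \<le> 1 - c" if r: "1 \<le> r" for r
  proof -
    obtain rs where rs: "rs \<in> {1..r}" "\<And>y. y \<in> {1..r} \<Longrightarrow> psi y \<le> psi rs"
      using continuous_attains_sup[OF compact_Icc _ psi_cont[of "{1..r}"]] r by auto
    have "c \<le> 1 - psi rs"
    proof (cases "rs \<le> R")
      case True
      then show ?thesis
        using r0(2)[of rs] rs by (simp add: c_def)
    next
      case False
      then have "1/2 < 1 - psi rs"
        using rs by (intro half_less_one_minus_psi_at_max[OF S]) (auto simp: R_def)
      then show ?thesis
        by (simp add: c_def)
    qed
    then show ?thesis
      using rs(2)[of r] r by simp
  qed
  with c show ?thesis
    by blast
qed

lemma power_le_powr_of_le_psi:
  assumes r0: "1 \<le> r0" and q: "0 \<le> q" and b: "0 < b"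
    and bound: "\<And>r. r0 \<le> r \<Longrightarrow> psi r \<le> q"
    and B: "\<And>y. y \<in> {r0..R} \<Longrightarrow> psi y * y powr b \<le> B" and B_nonneg: "0 \<le> B"
    and r: "0 < r" "r \<le> R" and x: "0 \<le> x" "x \<le> 1" "x \<le> psi r"
  shows "x ^ m \<le> (r0 powr b + q ^ (m - 1) * B) * r powr (- b)"
proof -
  have distrib: "(r0 powr b + q ^ (m - 1) * B) * r powr (- b)
      = r0 powr b * r powr (- b) + q ^ (m - 1) * B * r powr (- b)"
    by (simp add: distrib_right)
  show ?thesis
  proof (cases "r < r0")
    case True
    have "r powr b \<le> r0 powr b"
      using True r b by (intro powr_mono2) auto
    then have "1 \<le> r0 powr b * r powr (- b)"
      using r by (simp add: powr_minus field_simps)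
    moreover have "0 \<le> q ^ (m - 1) * B * r powr (- b)"
      using q B_nonneg by simp
    moreover have "x ^ m \<le> 1"
      using x by (simp add: power_le_one)
    ultimately show ?thesis
      unfolding distrib by linarith
  next
    case False
    then have "psi r * r powr b \<le> B"
      using r by (intro B) auto
    then have "psi r \<le> B * r powr (- b)"
      using r by (simp add: powr_minus field_simps)
    then have "q ^ (m - 1) * psi r \<le> q ^ (m - 1) * B * r powr (- b)"
      using q by (simp add: mult.assoc mult_left_mono)
    moreover have "x ^ m = x ^ (m - 1) * x"
      using m_ge_2 by (simp flip: power_Suc2)
    moreover have "x ^ (m - 1) * x \<le> q ^ (m - 1) * psi r"
      using x bound[of r] False psi_nonneg[of r] r by (intro mult_mono power_mono) auto
    moreover have "0 \<le> r0 powr b * r powr (- b)"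
      by simp
    ultimately show ?thesis
      unfolding distrib by linarith
  qed
qed

lemma norm_phi_kappa_power_le:
  assumes r0: "1 \<le> r0" and q: "0 \<le> q" and b: "0 < b"
    and bound: "\<And>r. r0 \<le> r \<Longrightarrow> psi r \<le> q"
    and B: "\<And>y. y \<in> {r0..cmod t} \<Longrightarrow> psi y * y powr b \<le> B" and B_nonneg: "0 \<le> B"
    and t: "r0 \<le> cmod t" and s: "0 \<le> s"
  shows "(cmod (phi (kappa s * t))) ^ m
    \<le> (r0 powr b + q ^ (m - 1) * B) * cmod t powr (- b) * exp (b * Re lam * s)"
proof -
  define r where "r = exp (- Re lam * s) * cmod t"
  have t_pos: "0 < cmod t"
    using r0 t by linarith
  have "(cmod (phi (kappa s * t))) ^ m \<le> (r0 powr b + q ^ (m - 1) * B) * r powr (- b)"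
  proof (rule power_le_powr_of_le_psi[OF r0 q b bound B B_nonneg])
    show "0 < r"
      using t_pos by (simp add: r_def)
    show "r \<le> cmod t"
      using norm_kappa_le_1[OF s] unfolding norm_kappa r_def by (intro mult_left_le_one_le) auto
    show "cmod (phi (kappa s * t)) \<le> psi r"
      unfolding r_def by (rule norm_phi_kappa_le_psi)
  qed (simp_all add: norm_phi_le_1)
  moreover have "r powr (- b) = cmod t powr (- b) * exp (b * Re lam * s)"
    unfolding r_def using powr_exp_mult[OF t_pos, of "- Re lam * s" "- b"] by (simp add: mult_ac)
  ultimately show ?thesis
    by (simp only: mult.assoc)
qed

lemma psi_mult_powr_le:
  assumes r0: "1 \<le> r0" and q: "0 \<le> q" and b: "0 < b" "b * Re lam < 1"
    and bound: "\<And>r. r0 \<le> r \<Longrightarrow> psi r \<le> q"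
    and B: "\<And>y. y \<in> {r0..rs} \<Longrightarrow> psi y * y powr b \<le> B" and B_nonneg: "0 \<le> B"
    and rs: "r0 \<le> rs"
  shows "psi rs * rs powr b \<le> (r0 powr b + q ^ (m - 1) * B) * (\<integral>s. exp (b * Re lam * s) \<partial>T_law m)"
proof -
  obtain t where t: "cmod t = rs" "psi rs = cmod (phi t)"
    using psi_attained[of rs] rs r0 by auto
  have "cmod (phi t) \<le> (\<integral>s. (r0 powr b + q ^ (m - 1) * B) * rs powr (- b) * exp (b * Re lam * s) \<partial>T_law m)"
  proof (rule norm_phi_le_integral)
    show "AE s in T_law m. (cmod (phi (kappa s * t))) ^ m
        \<le> (r0 powr b + q ^ (m - 1) * B) * rs powr (- b) * exp (b * Re lam * s)"
      using AE_T_law_nonneg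
      by eventually_elim (use norm_phi_kappa_power_le[OF r0 q b(1) bound] B B_nonneg rs t in auto)
    show "integrable (T_law m) (\<lambda>s. (r0 powr b + q ^ (m - 1) * B) * rs powr (- b) * exp (b * Re lam * s))"
      using T_law_exp_moment(1)[OF b(2)] by simp
  qed
  then have "psi rs * rs powr b
      \<le> (r0 powr b + q ^ (m - 1) * B) * rs powr (- b) * (\<integral>s. exp (b * Re lam * s) \<partial>T_law m) * rs powr b"
    using t by (simp add: mult_right_mono)
  also have "\<dots> = (r0 powr b + q ^ (m - 1) * B) * (\<integral>s. exp (b * Re lam * s) \<partial>T_law m)"
    using rs r0 by (simp add: powr_minus field_simps)
  finally show ?thesis .
qed

lemma psi_le_powr_of_bound:
  assumes r0: "1 \<le> r0" and q: "0 \<le> q" and b: "0 < b" "b * Re lam < 1"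
    and contraction: "q ^ (m - 1) * (\<integral>s. exp (b * Re lam * s) \<partial>T_law m) < 1"
    and bound: "\<And>r. r0 \<le> r \<Longrightarrow> psi r \<le> q"
  shows "\<exists>C. \<forall>r\<ge>r0. psi r \<le> C * r powr (- b)"
proof -
  define E where "E = (\<integral>s. exp (b * Re lam * s) \<partial>T_law m)"
  define \<theta> where "\<theta> = q ^ (m - 1) * E"
  have \<theta>: "\<theta> < 1"
    using contraction by (simp add: \<theta>_def E_def)
  define C where "C = r0 powr b * E / (1 - \<theta>)"
  have "psi r * r powr b \<le> C" if r: "r0 \<le> r" for r
  proof -
    define f where "f y = psi y * y powr b" for y
    have "{r0..r} \<noteq> {}"
      using r by simp
    moreover have "continuous_on {r0..r} f"
      unfolding f_def using r0
      by (intro continuous_intros continuous_on_subset[OF continuous_on_psi]) auto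
    ultimately obtain rs where rs: "rs \<in> {r0..r}" "\<And>y. y \<in> {r0..r} \<Longrightarrow> f y \<le> f rs"
      using continuous_attains_sup[OF compact_Icc] by blast
    have "0 \<le> f rs"
      using rs r0 psi_nonneg[of rs] by (simp add: f_def)
    then have "f rs \<le> (r0 powr b + q ^ (m - 1) * f rs) * E"
      unfolding E_def f_def using rs
      by (intro psi_mult_powr_le[OF r0 q b bound]) (auto simp: f_def intro: rs(2)[unfolded f_def])
    then have "f rs \<le> C"
      using \<theta> by (simp add: C_def \<theta>_def field_simps)
    moreover have "f r \<le> f rs"
      using r by (intro rs(2)) auto
    ultimately show ?thesis
      by (simp add: f_def)
  qed
  then have "psi r \<le> C * r powr (- b)" if "r0 \<le> r" for r
    using that r0 by (simp add: powr_minus field_simps)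
  then show ?thesis by blast
qed

lemma psi_tendsto_0: "(psi \<longlongrightarrow> 0) at_top"
proof -
  obtain c where c: "0 < c" "c \<le> 1/2" "\<And>r. 1 \<le> r \<Longrightarrow> psi r \<le> 1 - c"
    using psi_bounded_away_from_1 by blast
  define b where "b = c / (2 * Re lam)"
  have b: "0 < b" "b * Re lam < 1" "b * Re lam = c/2"
    using c Re_lam_pos by (auto simp: b_def)
  have "(1 - c) ^ (m - 1) * (\<integral>s. exp (b * Re lam * s) \<partial>T_law m) < 1"
    using power_mult_T_law_exp_moment_less_1[of c m] c m_ge_2 by (simp add: b(3))
  then have "\<exists>C. \<forall>r\<ge>1. psi r \<le> C * r powr (- b)"
    using c by (intro psi_le_powr_of_bound[OF order_refl _ b(1,2)]) auto
  then obtain C where C: "\<And>r. 1 \<le> r \<Longrightarrow> psi r \<le> C * r powr (- b)"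
    by blast
  have "eventually (\<lambda>r. 0 \<le> psi r) at_top"
    using eventually_ge_at_top[of 0] by eventually_elim (rule psi_nonneg)
  moreover have "eventually (\<lambda>r. psi r \<le> C * r powr (- b)) at_top"
    using eventually_ge_at_top[of 1] by eventually_elim (rule C)
  moreover have "((\<lambda>r. C * r powr (- b)) \<longlongrightarrow> 0) at_top"
    using tendsto_mult_right_zero[OF tendsto_neg_powr[OF _ filterlim_ident]] b by simp
  ultimately show ?thesis
    by (rule tendsto_sandwich[OF _ _ tendsto_const])
qed

text \<open>Once \<open>psi\<close> is small, the contraction condition of \<open>psi_le_powr_of_bound\<close> holds for
  the exponent \<open>a\<close> itself.\<close>
lemma psi_bigo:
  assumes a: "0 < a" "a < 1 / Re lam"
  shows "psi \<in> O(\<lambda>r. r powr (- a))"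
proof -
  define E where "E = (\<integral>s. exp (a * Re lam * s) \<partial>T_law m)"
  have aR: "a * Re lam < 1"
    using a Re_lam_pos by (simp add: field_simps)
  then have E: "0 < E"
    unfolding E_def by (rule T_law_exp_moment_pos)
  define q where "q = min (1/2) (1 / (2 * E))"
  have q: "0 < q" "q \<le> 1/2" "q * E \<le> 1/2"
    using E by (auto simp: q_def min_def field_simps)
  have "q ^ (m - 1) \<le> q ^ 1"
    using q m_ge_2 by (intro power_decreasing) auto
  then have "q ^ (m - 1) * E \<le> q * E"
    using E by (intro mult_right_mono) auto
  with q have contraction: "q ^ (m - 1) * E < 1"
    by simp
  have "eventually (\<lambda>r. psi r < q \<and> 1 \<le> r) at_top"
    using q by (intro eventually_conj order_tendstoD(2)[OF psi_tendsto_0] eventually_ge_at_top)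
  then obtain r0 where r0: "\<And>r. r0 \<le> r \<Longrightarrow> psi r < q \<and> 1 \<le> r"
    unfolding eventually_at_top_linorder by blast
  then obtain C where C: "\<And>r. r0 \<le> r \<Longrightarrow> psi r \<le> C * r powr (- a)"
    using psi_le_powr_of_bound[OF _ _ a(1) aR, of r0 q] q contraction
    by (force simp: E_def less_imp_le)
  have "eventually (\<lambda>r. norm (psi r) \<le> C * norm (r powr (- a))) at_top"
    using eventually_ge_at_top[of r0]
  proof eventually_elim
    case (elim r)
    then show ?case
      using C[of r] r0[of r] psi_nonneg[of r] by simp
  qed
  then show ?thesis
    by (rule bigoI)
qed

end

theorem lemma7p5:
  fixes M :: "'a measure" and Z :: "'a \<Rightarrow> complex" and m :: nat and lam :: complex
    and \<phi> :: "complex \<Rightarrow> complex" and \<psi> :: "real \<Rightarrow> real" and a :: real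
  assumes "m \<ge> 2"
    and "lam \<noteq> 1" and "Re lam > 0"
    and "prob_space M"
    and "Z \<in> borel_measurable M"
    and "integrable M Z"
    and "(\<integral>x. Z x \<partial>M) \<noteq> 0"
    and "distr M borel Z = fixpoint_rhs_law m lam (distr M borel Z)"
    and "\<And>t. \<phi> t = (\<integral>x. exp (\<i> * complex_of_real (cinner t (Z x))) \<partial>M)"
    and "\<And>r. r \<ge> 0 \<Longrightarrow> \<psi> r = (SUP t\<in>sphere 0 r. cmod (\<phi> t))"
    and "0 < a" and "a < 1 / Re lam"
  shows "\<psi> \<in> O(\<lambda>r. r powr (- a))"
proof -
  interpret fixpoint_law M Z m lam
    using assms(1-8) by (intro fixpoint_law.intro fixpoint_law_axioms.intro)
  have "\<phi> = phi"
    by (rule ext) (simp add: assms(9) phi_def)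
  have "eventually (\<lambda>r. psi r = \<psi> r) at_top"
    using eventually_ge_at_top[of 0]
    by eventually_elim (simp add: assms(10) psi_def \<open>\<phi> = phi\<close>)
  then show ?thesis
    using psi_bigo[OF assms(11,12)] by (simp add: landau_o.big.in_cong)
qed

end
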